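(* Let $I\subseteq R$ be an $\mathfrak m$-primary monomial ideal with $\mu_i=x_i^{d_i}\in G(I)$ for $i=1,\dots,n$. If $I$ is good, then every minimal generator $x_1^{\alpha_1}\cdots x_n^{\alpha_n}\in G(I)$ satisfies $\frac{\alpha_1}{d_1}+\cdots+\frac{\alpha_n}{d_n}\ge 1$.
   Context: Let $\mathbb K$ be a field, $R=\mathbb K[x_1,\dots,x_n]$, $\mathfrak m=\langle x_1,\dots,x_n\rangle$, $\mathbb N=\{0,1,2,\dots\}$. A monomial $x_1^{\alpha_1}\cdots x_n^{\alpha_n}$ is identified with the point $(\alpha_1,\dots,\alpha_n)\in\mathbb N^n$. For a monomial ideal $I$, $G(I)$ denotes its (unique) minimal monomial generating set. If $I$ is an $\mathfrak m$-primary monomial ideal, then for each $i$ there is a unique $d_i\ge1$ with $x_i^{d_i}\in G(I)$; write $\mu_i=x_i^{d_i}$. For $(a_1,\dots,a_n)\in\mathbb N^n$ the box associated to $I$ is $B_{a_1,\dots,a_n}=([a_1d_1,(a_1+1)d_1]\times\cdots\times[a_nd_n,(a_n+1)d_n])\cap\mathbb N^n$; a monomial belongs to a box if its exponent vector does. $I$ is called good if for every integer $l\ge1$, every element of $G(I^l)$ belongs to some box $B_{a_1,\dots,a_n}$ with $a_1+\dots+a_n=l-1$; otherwise $I$ is called bad. *)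

theory Defs
  imports Complex_Main
begin

text \<open>Monomials of K[x_1..x_n] are identified with exponent vectors
  a :: nat => nat with a i = 0 for i >= n (variable x_(i+1) has index i).
  A monomial ideal is identified with the set of (exponent vectors of)
  monomials it contains; this set determines the ideal.\<close>

definition expvecs :: "nat \<Rightarrow> (nat \<Rightarrow> nat) set" where
  "expvecs n = {a. \<forall>i\<ge>n. a i = 0}"

definition divides_mon :: "(nat \<Rightarrow> nat) \<Rightarrow> (nat \<Rightarrow> nat) \<Rightarrow> bool" where
  "divides_mon a b \<longleftrightarrow> (\<forall>i. a i \<le> b i)"

definition monomial_ideal :: "nat \<Rightarrow> (nat \<Rightarrow> nat) set \<Rightarrow> bool" where
  "monomial_ideal n S \<longleftrightarrow> S \<subseteq> expvecs n \<and>
     (\<forall>a\<in>S. \<forall>b\<in>expvecs n. divides_mon a b \<longrightarrow> b \<in> S)"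

definition mingens :: "(nat \<Rightarrow> nat) set \<Rightarrow> (nat \<Rightarrow> nat) set" where
  "mingens S = {a\<in>S. \<forall>b\<in>S. divides_mon b a \<longrightarrow> b = a}"

definition pure :: "nat \<Rightarrow> nat \<Rightarrow> (nat \<Rightarrow> nat)" where
  "pure i d = (\<lambda>j. if j = i then d else 0)"

definition m_primary :: "nat \<Rightarrow> (nat \<Rightarrow> nat) set \<Rightarrow> bool" where
  "m_primary n S \<longleftrightarrow> monomial_ideal n S \<and> (\<lambda>_. 0) \<notin> S \<and>
     (\<forall>i<n. \<exists>d. pure i d \<in> S)"

definition pdeg :: "(nat \<Rightarrow> nat) set \<Rightarrow> nat \<Rightarrow> nat" where
  "pdeg S i = (LEAST d. pure i d \<in> S)"

definition ideal_pow :: "nat \<Rightarrow> (nat \<Rightarrow> nat) set \<Rightarrow> nat \<Rightarrow> (nat \<Rightarrow> nat) set" where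
  "ideal_pow n S l = {b \<in> expvecs n. \<exists>f. (\<forall>k<l. f k \<in> S) \<and>
      divides_mon (\<lambda>i. \<Sum>k<l. f k i) b}"

definition in_box :: "nat \<Rightarrow> (nat \<Rightarrow> nat) set \<Rightarrow> (nat \<Rightarrow> nat) \<Rightarrow> (nat \<Rightarrow> nat) \<Rightarrow> bool" where
  "in_box n S c b \<longleftrightarrow> (\<forall>i<n. c i * pdeg S i \<le> b i \<and> b i \<le> (c i + 1) * pdeg S i)"

definition good :: "nat \<Rightarrow> (nat \<Rightarrow> nat) set \<Rightarrow> bool" where
  "good n S \<longleftrightarrow> (\<forall>l\<ge>1. \<forall>b\<in>mingens (ideal_pow n S l).
      \<exists>c. (\<Sum>i<n. c i) = l - 1 \<and> in_box n S c b)"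

end

theory Submission
  imports Defs
begin

text \<open>For a monomial a of I and any l \<ge> 1, the power a^l lies in I^l, so some minimal generator of
  I^l divides it; goodness puts that generator in a box B_c with \<Sum>c_i = l - 1, and reading off the
  lower corner of the box gives l - 1 \<le> l \<Sum>a_i/d_i. Letting l \<rightarrow> \<infinity> yields \<Sum>a_i/d_i \<ge> 1.\<close>

lemma ex_mingens_divides:
  assumes "S \<subseteq> expvecs n" "x \<in> S"
  shows "\<exists>b\<in>mingens S. divides_mon b x"
  using assms(2)
proof (induction "\<Sum>i<n. x i" arbitrary: x rule: less_induct)
  case less
  show ?case
  proof (cases "x \<in> mingens S")
    case True
    then show ?thesis by (auto simp: divides_mon_def)
  next
    case False
    then obtain b where b: "b \<in> S" "divides_mon b x" "b \<noteq> x"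
      using less.prems unfolding mingens_def by auto
    have bx: "\<And>i. b i \<le> x i" using b(2) by (auto simp: divides_mon_def)
    obtain j where j: "b j \<noteq> x j" using b(3) by auto
    have "j < n"
    proof (rule ccontr)
      assume "\<not> j < n"
      then have "b j = 0" "x j = 0" using assms(1) b(1) less.prems
        by (auto simp: expvecs_def)
      then show False using j by simp
    qed
    then have "(\<Sum>i<n. b i) < (\<Sum>i<n. x i)"
      using bx j by (intro sum_strict_mono_ex1) (auto simp: order_less_le)
    then obtain c where "c \<in> mingens S" "divides_mon c b"
      using less.hyps b(1) by blast
    then show ?thesis using b(2) by (auto simp: divides_mon_def intro: order_trans)
  qed
qed

lemma pdeg_pos:
  assumes "m_primary n I" "i < n"
  shows "pdeg I i > 0"
proof -
  obtain d where "pure i d \<in> I" using assms unfolding m_primary_def by blast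
  then have "pure i (pdeg I i) \<in> I" unfolding pdeg_def by (rule LeastI)
  moreover have "pure i 0 = (\<lambda>_. 0)" by (auto simp: pure_def)
  ultimately show ?thesis using assms(1) by (cases "pdeg I i") (auto simp: m_primary_def)
qed

lemma scaled_mem_ideal_pow:
  assumes "I \<subseteq> expvecs n" "a \<in> I"
  shows "(\<lambda>i. l * a i) \<in> ideal_pow n I l"
  unfolding ideal_pow_def
proof (intro CollectI conjI exI[of _ "\<lambda>_. a"])
  show "(\<lambda>i. l * a i) \<in> expvecs n" using assms by (auto simp: expvecs_def)
qed (use assms(2) in \<open>auto simp: divides_mon_def\<close>)

lemma good_scaled_bound:
  assumes "m_primary n I" "good n I" "a \<in> I" "l \<ge> 1"
  shows "real l - 1 \<le> real l * (\<Sum>i<n. real (a i) / real (pdeg I i))"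
proof -
  have "I \<subseteq> expvecs n" using assms(1) by (simp add: m_primary_def monomial_ideal_def)
  then have "(\<lambda>i. l * a i) \<in> ideal_pow n I l" using assms(3) by (rule scaled_mem_ideal_pow)
  moreover have "ideal_pow n I l \<subseteq> expvecs n" by (auto simp: ideal_pow_def)
  ultimately obtain b where b: "b \<in> mingens (ideal_pow n I l)" "divides_mon b (\<lambda>i. l * a i)"
    using ex_mingens_divides by blast
  obtain c where c: "(\<Sum>i<n. c i) = l - 1" "in_box n I c b"
    using assms(2,4) b(1) unfolding good_def by blast
  have "real l - 1 = real (l - 1)" using assms(4) by (simp add: of_nat_diff)
  also have "\<dots> = (\<Sum>i<n. real (c i))" using c(1) by (metis of_nat_sum)
  also have "\<dots> \<le> (\<Sum>i<n. real l * (real (a i) / real (pdeg I i)))"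
  proof (rule sum_mono)
    fix i assume "i \<in> {..<n}"
    then have i: "i < n" by simp
    have "c i * pdeg I i \<le> b i" using c(2) i by (simp add: in_box_def)
    also have "b i \<le> l * a i" using b(2) by (simp add: divides_mon_def)
    finally have "real (c i) * real (pdeg I i) \<le> real l * real (a i)"
      by (metis of_nat_le_iff of_nat_mult)
    then show "real (c i) \<le> real l * (real (a i) / real (pdeg I i))"
      using pdeg_pos[OF assms(1) i] by (simp add: field_simps)
  qed
  also have "\<dots> = real l * (\<Sum>i<n. real (a i) / real (pdeg I i))"
    by (rule sum_distrib_left[symmetric])
  finally show ?thesis .
qed

lemma ge_one_if_scaled_bounds:
  fixes s :: real
  assumes "\<And>l::nat. l \<ge> 1 \<Longrightarrow> real l - 1 \<le> real l * s"
  shows "s \<ge> 1"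
proof (rule ccontr)
  assume "\<not> s \<ge> 1"
  then have s: "s < 1" by simp
  obtain l :: nat where l: "real l > 1 / (1 - s)" using reals_Archimedean2 by blast
  then have "l \<ge> 1" using s by (cases l) auto
  then have "real l * (1 - s) \<le> 1" using assms by (simp add: algebra_simps)
  moreover have "real l * (1 - s) > 1" using l s by (simp add: field_simps)
  ultimately show False by simp
qed

theorem mainTheorem2:
  fixes n :: nat and I :: "(nat \<Rightarrow> nat) set"
  assumes "m_primary n I"
    and "good n I"
    and "a \<in> mingens I"
  shows "(\<Sum>i<n. real (a i) / real (pdeg I i)) \<ge> 1"
proof (rule ge_one_if_scaled_bounds)
  have "a \<in> I" using assms(3) by (simp add: mingens_def)
  then show "real l - 1 \<le> real l * (\<Sum>i<n. real (a i) / real (pdeg I i))" if "l \<ge> 1" for l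
    using good_scaled_bound assms(1,2) that by blast
qed

end
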